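(* Let $m\ge1$, $K_1,\dots,K_m>0$, and $f_i(x)=\frac{K_i x}{K_i+x}$. For $\rho\in[0,1)$ let $(\mathbf{u}(\rho),\mu(\rho))$ be the unique steady state of the infinite-population foraging model, i.e. the unique solution with $u_i\ge0$, $\sum_iu_i=1$, $0<\mu<1$ of $$u_i=\Big((1-\rho)+\frac{\rho}{\mu}\Big)f_i(u_i)+\frac{1-\rho}{m}(1-\mu)\ (i=1,\dots,m),\qquad \mu=\sum_{i=1}^m f_i(u_i).$$ Then $$\lim_{\rho\to1}u_i(\rho)=\frac{K_i}{\sum_{j=1}^mK_j}\quad(i=1,\dots,m),\qquad \lim_{\rho\to1}\mu(\rho)=\frac{\sum_{j=1}^mK_j}{1+\sum_{j=1}^mK_j}.$$
   Context: The infinite-population foraging model is the map on the probability simplex in $\mathbb{R}^m$ given by $\mathbf{u}_{n+1}=\mathbf{f}(\mathbf{u}_n)+(1-\langle\mathbf{1},\mathbf{f}(\mathbf{u}_n)\rangle)\big(\frac{\rho}{\langle\mathbf{1},\mathbf{f}(\mathbf{u}_n)\rangle}\mathbf{f}(\mathbf{u}_n)+\frac{1-\rho}{m}\mathbf{1}\big)$, where $\mathbf{f}(\mathbf{u})=(f_1(u_1),\dots,f_m(u_m))^T$ and $\rho\in[0,1]$ is the recruitment probability; $K_i$ is the resource abundance at site $i$. For $\rho<1$ this map has a unique fixed point on the simplex, which is the steady state referred to. At $\rho=1$ the steady states are the points with $u_i=K_i/\sum_{j\in\mathcal I}K_j$ for $i\in\mathcal I$ and $u_i=0$ otherwise, for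 any nonempty $\mathcal I\subset\{1,\dots,m\}$. *)

theory Defs
  imports "HOL-Analysis.Analysis"
begin

definition forage_f :: "real \<Rightarrow> real \<Rightarrow> real" where
  "forage_f Ki x = Ki * x / (Ki + x)"

definition is_steady_state ::
  "nat \<Rightarrow> (nat \<Rightarrow> real) \<Rightarrow> real \<Rightarrow> (nat \<Rightarrow> real) \<Rightarrow> real \<Rightarrow> bool" where
  "is_steady_state m K \<rho> u \<mu> \<longleftrightarrow>
     (\<forall>i\<in>{1..m}. u i \<ge> 0) \<and> (\<Sum>i=1..m. u i) = 1 \<and> 0 < \<mu> \<and> \<mu> < 1 \<and>
     (\<forall>i\<in>{1..m}. u i = ((1 - \<rho>) + \<rho> / \<mu>) * forage_f (K i) (u i)
                         + (1 - \<rho>) / real m * (1 - \<mu>)) \<and>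
     \<mu> = (\<Sum>i=1..m. forage_f (K i) (u i))"

end

theory Submission
  imports Defs
begin

text \<open>Put \<open>t = \<rho>(1 - \<mu>)/\<mu>\<close>, so that \<open>f\<^sub>i\<close> enters the steady-state equation with
  coefficient \<open>1 + t\<close>. Solving the \<open>i\<close>-th equation for the quadratic term gives
  \<open>u\<^sub>i = t K\<^sub>i + e\<^sub>i\<close> with \<open>e\<^sub>i = a (K\<^sub>i + u\<^sub>i)/u\<^sub>i \<ge> 0\<close>, where \<open>a = (1 - \<rho>)(1 - \<mu>)/m\<close>.
  Since \<open>1 - \<mu> = \<Sum>\<^sub>j u\<^sub>j\<^sup>2/(K\<^sub>j + u\<^sub>j)\<close> and some \<open>u\<^sub>j \<ge> 1/m\<close>, the gap \<open>1 - \<mu>\<close> is bounded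
  below uniformly in \<open>\<rho>\<close>; hence \<open>t\<close> and \<open>u\<^sub>i \<ge> t K\<^sub>i\<close> are too, and \<open>e\<^sub>i = O(1 - \<rho>)\<close>.
  Summing \<open>u\<^sub>i = t K\<^sub>i + e\<^sub>i\<close> then forces \<open>t \<rightarrow> 1/\<Sum>\<^sub>j K\<^sub>j\<close>, which gives both limits,
  the second through \<open>\<mu> = \<rho>/(\<rho> + t)\<close>.\<close>

definition excess_gain :: "real \<Rightarrow> real \<Rightarrow> real" where
  "excess_gain \<rho> \<mu> = \<rho> * (1 - \<mu>) / \<mu>"

lemma forage_f_fixed_point_residual:
  assumes fixed: "u = c * forage_f k u + a" and "u > 0" "k > 0"
  shows "u - (c - 1) * k = a * (k + u) / u"
proof -
  have "u * (k + u) = c * k * u + a * (k + u)"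
    using fixed assms(2,3) by (simp add: forage_f_def field_simps)
  then have "u * u = a * (k + u) + (c - 1) * k * u"
    by (simp add: algebra_simps)
  then show ?thesis
    using \<open>u > 0\<close> by (simp add: field_simps)
qed

lemma diff_forage_f:
  assumes "k > 0" "u \<ge> 0"
  shows "u - forage_f k u = u\<^sup>2 / (k + u)"
  using assms by (simp add: forage_f_def field_simps power2_eq_square)

lemma steady_state_pos:
  assumes "m \<ge> 1" and ss: "is_steady_state m K \<rho> u \<mu>" and "\<rho> < 1" and i: "i \<in> {1..m}"
  shows "u i > 0"
proof -
  have "u i \<ge> 0" and "0 < \<mu>" "\<mu> < 1"
    and eq: "u i = ((1 - \<rho>) + \<rho> / \<mu>) * forage_f (K i) (u i) + (1 - \<rho>) / real m * (1 - \<mu>)"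
    using ss i unfolding is_steady_state_def by blast+
  moreover have "(1 - \<rho>) / real m * (1 - \<mu>) > 0"
    using assms \<open>\<mu> < 1\<close> by simp
  ultimately show ?thesis by (cases "u i = 0") (auto simp: forage_f_def)
qed

lemma steady_state_residual:
  assumes "m \<ge> 1" and "\<And>j. j \<in> {1..m} \<Longrightarrow> K j > 0"
    and ss: "is_steady_state m K \<rho> u \<mu>" and "\<rho> < 1" and i: "i \<in> {1..m}"
  shows "u i - excess_gain \<rho> \<mu> * K i = (1 - \<rho>) / real m * (1 - \<mu>) * (K i + u i) / u i"
proof -
  have "0 < \<mu>"
    and eq: "u i = ((1 - \<rho>) + \<rho> / \<mu>) * forage_f (K i) (u i) + (1 - \<rho>) / real m * (1 - \<mu>)"
    using ss i unfolding is_steady_state_def by blast+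
  then have "((1 - \<rho>) + \<rho> / \<mu>) - 1 = excess_gain \<rho> \<mu>"
    unfolding excess_gain_def by (simp add: field_simps)
  with forage_f_fixed_point_residual[OF eq steady_state_pos[OF assms(1) ss \<open>\<rho> < 1\<close> i] assms(2)[OF i]]
  show ?thesis by simp
qed

lemma steady_state_one_minus_mu:
  assumes "\<And>j. j \<in> {1..m} \<Longrightarrow> K j > 0" and ss: "is_steady_state m K \<rho> u \<mu>"
  shows "1 - \<mu> = (\<Sum>j=1..m. (u j)\<^sup>2 / (K j + u j))"
proof -
  have "(\<Sum>j=1..m. u j) = 1" "\<mu> = (\<Sum>j=1..m. forage_f (K j) (u j))" "\<forall>j\<in>{1..m}. u j \<ge> 0"
    using ss unfolding is_steady_state_def by blast+
  then have "1 - \<mu> = (\<Sum>j=1..m. u j - forage_f (K j) (u j))"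
    by (simp add: sum_subtractf)
  also have "\<dots> = (\<Sum>j=1..m. (u j)\<^sup>2 / (K j + u j))"
    using assms(1) \<open>\<forall>j\<in>{1..m}. u j \<ge> 0\<close> by (intro sum.cong) (simp_all add: diff_forage_f)
  finally show ?thesis .
qed

lemma steady_state_mu_gap:
  assumes "m \<ge> 1" and Kp: "\<And>j. j \<in> {1..m} \<Longrightarrow> K j > 0" and ss: "is_steady_state m K \<rho> u \<mu>"
  shows "1 / (real m ^ 2 * ((\<Sum>j=1..m. K j) + 1)) \<le> 1 - \<mu>"
proof -
  have u_nonneg: "\<forall>j\<in>{1..m}. u j \<ge> 0" and u_sum: "(\<Sum>j=1..m. u j) = 1"
    using ss unfolding is_steady_state_def by blast+
  have "\<exists>j\<in>{1..m}. u j \<ge> 1 / real m"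
  proof (rule ccontr)
    assume "\<not> ?thesis"
    then have "(\<Sum>j=1..m. u j) < (\<Sum>j=1..m. 1 / real m)"
      using \<open>m \<ge> 1\<close> by (intro sum_strict_mono) (simp_all add: not_le)
    with u_sum \<open>m \<ge> 1\<close> show False by simp
  qed
  then obtain j where j: "j \<in> {1..m}" "u j \<ge> 1 / real m" ..
  have "0 \<le> u j" "u j \<le> 1"
    using u_sum u_nonneg j(1) member_le_sum[of j "{1..m}" u] by simp_all
  moreover have "K j \<le> (\<Sum>j=1..m. K j)"
    using Kp j(1) by (intro member_le_sum) (auto intro: less_imp_le)
  ultimately have "(1 / real m)\<^sup>2 / ((\<Sum>j=1..m. K j) + 1) \<le> (u j)\<^sup>2 / (K j + u j)"
    using j \<open>m \<ge> 1\<close> Kp[OF j(1)] by (intro frac_le power_mono) auto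
  also have "\<dots> \<le> (\<Sum>j=1..m. (u j)\<^sup>2 / (K j + u j))"
    using j(1) u_nonneg Kp by (intro member_le_sum) (auto intro!: divide_nonneg_pos add_pos_nonneg)
  also have "\<dots> = 1 - \<mu>"
    using steady_state_one_minus_mu[OF Kp ss] by simp
  finally show ?thesis by (simp add: power_divide)
qed

lemma steady_state_excess_gain_lower:
  assumes "m \<ge> 1" and "\<And>j. j \<in> {1..m} \<Longrightarrow> K j > 0" and ss: "is_steady_state m K \<rho> u \<mu>"
    and "0 \<le> \<rho>"
  shows "\<rho> / (real m ^ 2 * ((\<Sum>j=1..m. K j) + 1)) \<le> excess_gain \<rho> \<mu>"
proof -
  have "0 < \<mu>" "\<mu> < 1"
    using ss unfolding is_steady_state_def by blast+
  have "\<rho> / (real m ^ 2 * ((\<Sum>j=1..m. K j) + 1)) \<le> \<rho> * (1 - \<mu>)"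
    using mult_left_mono[OF steady_state_mu_gap[OF assms(1-3)] \<open>0 \<le> \<rho>\<close>] by simp
  also have "\<dots> \<le> \<rho> * (1 - \<mu>) / \<mu>"
    using \<open>0 < \<mu>\<close> \<open>\<mu> < 1\<close> \<open>0 \<le> \<rho>\<close> by (simp add: le_divide_eq mult_left_le)
  finally show ?thesis unfolding excess_gain_def .
qed

lemma steady_state_residual_nonneg:
  assumes "m \<ge> 1" and Kp: "\<And>j. j \<in> {1..m} \<Longrightarrow> K j > 0" and ss: "is_steady_state m K \<rho> u \<mu>"
    and "\<rho> < 1" and i: "i \<in> {1..m}"
  shows "0 \<le> u i - excess_gain \<rho> \<mu> * K i"
proof -
  have "\<mu> < 1"
    using ss unfolding is_steady_state_def by blast
  then show ?thesis
    using steady_state_residual[OF assms] steady_state_pos[OF assms(1) ss \<open>\<rho> < 1\<close> i] Kp[OF i]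
      \<open>\<rho> < 1\<close> by simp
qed

lemma steady_state_lower:
  assumes "m \<ge> 1" and Kp: "\<And>j. j \<in> {1..m} \<Longrightarrow> K j > 0" and "is_steady_state m K \<rho> u \<mu>"
    and "0 \<le> \<rho>" "\<rho> < 1" and i: "i \<in> {1..m}"
  shows "\<rho> / (real m ^ 2 * ((\<Sum>j=1..m. K j) + 1)) * K i \<le> u i"
proof -
  have "\<rho> / (real m ^ 2 * ((\<Sum>j=1..m. K j) + 1)) * K i \<le> excess_gain \<rho> \<mu> * K i"
    using steady_state_excess_gain_lower[OF assms(1-4)] Kp[OF i] by (intro mult_right_mono) auto
  also have "\<dots> \<le> u i"
    using steady_state_residual_nonneg[OF assms(1-3,5,6)] by simp
  finally show ?thesis .
qed

lemma steady_state_residual_le: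
  assumes "m \<ge> 1" and Kp: "\<And>j. j \<in> {1..m} \<Longrightarrow> K j > 0" and ss: "is_steady_state m K \<rho> u \<mu>"
    and "0 < \<rho>" "\<rho> < 1" and i: "i \<in> {1..m}"
  shows "u i - excess_gain \<rho> \<mu> * K i
           \<le> (1 - \<rho>) / \<rho> * ((K i + 1) / K i * (real m ^ 2 * ((\<Sum>j=1..m. K j) + 1)))"
proof -
  define D where "D = real m ^ 2 * ((\<Sum>j=1..m. K j) + 1)"
  define a where "a = (1 - \<rho>) / real m * (1 - \<mu>)"
  have "0 < \<mu>" "\<mu> < 1" and "(\<Sum>j=1..m. u j) = 1" "\<forall>j\<in>{1..m}. u j \<ge> 0"
    using ss unfolding is_steady_state_def by blast+
  then have "u i \<le> 1"
    using i member_le_sum[of i "{1..m}" u] by simp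
  have "0 < (\<Sum>j=1..m. K j)"
    using \<open>m \<ge> 1\<close> Kp by (intro sum_pos) auto
  then have "0 < D"
    unfolding D_def using \<open>m \<ge> 1\<close> by simp
  have "0 < u i" "0 < K i"
    using steady_state_pos[OF assms(1) ss \<open>\<rho> < 1\<close> i] Kp i by auto
  have "(1 - \<mu>) / real m \<le> 1"
    using \<open>m \<ge> 1\<close> \<open>0 < \<mu>\<close> by simp
  then have "a \<le> 1 - \<rho>"
    unfolding a_def using \<open>\<rho> < 1\<close> mult_left_mono[of "(1 - \<mu>) / real m" 1 "1 - \<rho>"] by simp
  have "u i - excess_gain \<rho> \<mu> * K i = a * (K i + u i) / u i"
    unfolding a_def using steady_state_residual[OF assms(1) Kp ss \<open>\<rho> < 1\<close> i] .
  also have "\<dots> \<le> (1 - \<rho>) * (K i + 1) / (\<rho> / D * K i)"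
    using steady_state_lower[OF assms(1-3) _ \<open>\<rho> < 1\<close> i] \<open>a \<le> 1 - \<rho>\<close> \<open>0 < u i\<close> \<open>u i \<le> 1\<close>
      \<open>0 < K i\<close> \<open>0 < D\<close> \<open>0 < \<rho>\<close> \<open>\<rho> < 1\<close> \<open>\<mu> < 1\<close> \<open>m \<ge> 1\<close>
    unfolding D_def a_def by (intro frac_le mult_mono) auto
  also have "\<dots> = (1 - \<rho>) / \<rho> * ((K i + 1) / K i * D)"
    using \<open>0 < \<rho>\<close> \<open>0 < D\<close> \<open>0 < K i\<close> by (simp add: field_simps)
  finally show ?thesis
    unfolding D_def .
qed

lemma steady_state_mu_eq:
  assumes "is_steady_state m K \<rho> u \<mu>" and "0 < \<rho>"
  shows "\<mu> = \<rho> / (\<rho> + excess_gain \<rho> \<mu>)"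
proof -
  have "0 < \<mu>"
    using assms(1) unfolding is_steady_state_def by blast
  then have "\<rho> + excess_gain \<rho> \<mu> = \<rho> / \<mu>"
    unfolding excess_gain_def by (simp add: field_simps)
  with \<open>0 < \<mu>\<close> \<open>0 < \<rho>\<close> show ?thesis by simp
qed

lemma tendsto_steady_state_residual:
  assumes "m \<ge> 1" and Kp: "\<And>j. j \<in> {1..m} \<Longrightarrow> K j > 0"
    and ss: "eventually (\<lambda>\<rho>. is_steady_state m K \<rho> (U \<rho>) (M \<rho>)) (at_left 1)"
    and i: "i \<in> {1..m}"
  shows "((\<lambda>\<rho>. U \<rho> i - excess_gain \<rho> (M \<rho>) * K i) \<longlongrightarrow> 0) (at_left 1)"
proof -
  define C where "C = (K i + 1) / K i * (real m ^ 2 * ((\<Sum>j=1..m. K j) + 1))"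
  have near: "eventually (\<lambda>\<rho>. \<rho> \<in> {0<..<1} \<and> is_steady_state m K \<rho> (U \<rho>) (M \<rho>)) (at_left 1)"
    using eventually_at_left_real[of 0 "1::real", simplified] ss by (auto elim: eventually_elim2)
  show ?thesis
  proof (rule tendsto_sandwich)
    show "eventually (\<lambda>\<rho>. 0 \<le> U \<rho> i - excess_gain \<rho> (M \<rho>) * K i) (at_left 1)"
      using near by eventually_elim (use steady_state_residual_nonneg[OF assms(1) Kp _ _ i] in auto)
    show "eventually (\<lambda>\<rho>. U \<rho> i - excess_gain \<rho> (M \<rho>) * K i \<le> (1 - \<rho>) / \<rho> * C) (at_left 1)"
      using near unfolding C_def
      by eventually_elim (use steady_state_residual_le[OF assms(1) Kp _ _ _ i] in auto)
    have "((\<lambda>\<rho>. (1 - \<rho>) / \<rho> * C) \<longlongrightarrow> (1 - 1) / 1 * C) (at_left (1::real))"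
      by (intro tendsto_intros) auto
    then show "((\<lambda>\<rho>. (1 - \<rho>) / \<rho> * C) \<longlongrightarrow> 0) (at_left 1)"
      by simp
  qed simp
qed

lemma tendsto_excess_gain:
  assumes "m \<ge> 1" and Kp: "\<And>j. j \<in> {1..m} \<Longrightarrow> K j > 0"
    and ss: "eventually (\<lambda>\<rho>. is_steady_state m K \<rho> (U \<rho>) (M \<rho>)) (at_left 1)"
  shows "((\<lambda>\<rho>. excess_gain \<rho> (M \<rho>)) \<longlongrightarrow> 1 / (\<Sum>j=1..m. K j)) (at_left 1)"
proof -
  define S where "S = (\<Sum>j=1..m. K j)"
  define E where "E = (\<lambda>\<rho>. \<Sum>j=1..m. U \<rho> j - excess_gain \<rho> (M \<rho>) * K j)"
  have "0 < S"
    unfolding S_def using \<open>m \<ge> 1\<close> Kp by (intro sum_pos) auto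
  have "(E \<longlongrightarrow> 0) (at_left 1)"
    unfolding E_def by (intro tendsto_null_sum tendsto_steady_state_residual[OF assms]) auto
  then have "((\<lambda>\<rho>. (1 - E \<rho>) / S) \<longlongrightarrow> (1 - 0) / S) (at_left 1)"
    using \<open>0 < S\<close> by (intro tendsto_intros) auto
  moreover have "eventually (\<lambda>\<rho>. (1 - E \<rho>) / S = excess_gain \<rho> (M \<rho>)) (at_left 1)"
    using ss
  proof eventually_elim
    case (elim \<rho>)
    then have "1 = excess_gain \<rho> (M \<rho>) * S + E \<rho>"
      unfolding is_steady_state_def E_def S_def by (simp add: sum_subtractf sum_distrib_left)
    with \<open>0 < S\<close> show ?case by (simp add: field_simps)
  qed
  ultimately show ?thesis
    unfolding S_def by (simp add: tendsto_cong)
qed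

lemma tendsto_steady_state:
  assumes "m \<ge> 1" and Kp: "\<And>j. j \<in> {1..m} \<Longrightarrow> K j > 0"
    and ss: "eventually (\<lambda>\<rho>. is_steady_state m K \<rho> (U \<rho>) (M \<rho>)) (at_left 1)"
  shows "(\<forall>i\<in>{1..m}. ((\<lambda>\<rho>. U \<rho> i) \<longlongrightarrow> K i / (\<Sum>j=1..m. K j)) (at_left 1)) \<and>
         (M \<longlongrightarrow> (\<Sum>j=1..m. K j) / (1 + (\<Sum>j=1..m. K j))) (at_left 1)"
proof -
  define S where "S = (\<Sum>j=1..m. K j)"
  define t where "t = (\<lambda>\<rho>. excess_gain \<rho> (M \<rho>))"
  have "0 < S"
    unfolding S_def using \<open>m \<ge> 1\<close> Kp by (intro sum_pos) auto
  have t: "(t \<longlongrightarrow> 1 / S) (at_left 1)"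
    unfolding t_def S_def by (rule tendsto_excess_gain[OF assms])
  have "((\<lambda>\<rho>. U \<rho> i) \<longlongrightarrow> K i / S) (at_left 1)" if i: "i \<in> {1..m}" for i
  proof -
    have "((\<lambda>\<rho>. t \<rho> * K i + (U \<rho> i - t \<rho> * K i)) \<longlongrightarrow> 1 / S * K i + 0) (at_left 1)"
      unfolding t_def by (intro tendsto_intros t[unfolded t_def] tendsto_steady_state_residual[OF assms i])
    then show ?thesis by simp
  qed
  moreover have "(M \<longlongrightarrow> S / (1 + S)) (at_left 1)"
  proof -
    have "((\<lambda>\<rho>. \<rho> / (\<rho> + t \<rho>)) \<longlongrightarrow> 1 / (1 + 1 / S)) (at_left 1)"
      using \<open>0 < S\<close> by (intro tendsto_intros t) (simp add: add_pos_pos less_imp_neq[symmetric])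
    moreover have "eventually (\<lambda>\<rho>. \<rho> / (\<rho> + t \<rho>) = M \<rho>) (at_left 1)"
      using eventually_at_left_real[of 0 "1::real", simplified] ss
      by eventually_elim (simp add: t_def steady_state_mu_eq[symmetric])
    ultimately show ?thesis
      using \<open>0 < S\<close> by (simp add: tendsto_cong field_simps)
  qed
  ultimately show ?thesis unfolding S_def by blast
qed

theorem mainTheorem2:
  fixes m :: nat and K :: "nat \<Rightarrow> real"
    and U :: "real \<Rightarrow> nat \<Rightarrow> real" and M :: "real \<Rightarrow> real"
  assumes "m \<ge> 1"
    and "\<And>i. i \<in> {1..m} \<Longrightarrow> K i > 0"
    and "\<And>\<rho>. 0 \<le> \<rho> \<Longrightarrow> \<rho> < 1 \<Longrightarrow>
           is_steady_state m K \<rho> (U \<rho>) (M \<rho>) \<and>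
           (\<forall>u \<mu>. is_steady_state m K \<rho> u \<mu> \<longrightarrow> (\<forall>i\<in>{1..m}. u i = U \<rho> i) \<and> \<mu> = M \<rho>)"
  shows "(\<forall>i\<in>{1..m}. ((\<lambda>\<rho>. U \<rho> i) \<longlongrightarrow> K i / (\<Sum>j=1..m. K j)) (at_left 1)) \<and>
         (M \<longlongrightarrow> (\<Sum>j=1..m. K j) / (1 + (\<Sum>j=1..m. K j))) (at_left 1)"
proof (rule tendsto_steady_state[OF assms(1,2)])
  show "eventually (\<lambda>\<rho>. is_steady_state m K \<rho> (U \<rho>) (M \<rho>)) (at_left 1)"
    using eventually_at_left_real[of 0 "1::real", simplified]
    by eventually_elim (use assms(3) in auto)
qed

end
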